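(* Let $m,n$ be positive integers, $U\subseteq\mathbb{R}^{m\times n}$ a non-empty open set, and $f_k:U\to\mathbb{R}^{m\times n}$, $k\ge1$, a sequence of injective continuous functions. Then $\bigcap_{k\ge1}f_k^{-1}(\mathscr{L}_{m,n})\cap\mathscr{L}_{m,n}$ is a dense $G_\delta$ subset of $U$; in particular there is a dense $G_\delta$ subset $\Omega$ of $U$ with $\Omega\subseteq\mathscr{L}_{m,n}$ and $f_k(A)\in\mathscr{L}_{m,n}$ for all $A\in\Omega$ and all $k\ge1$.
   Context: $\Vert\cdot\Vert$ is the supremum norm; a real $m\times n$ matrix $A$ is a Liouville matrix if $A\mathbf{q}-\mathbf{p}\neq\mathbf{0}$ for all nonzero $(\mathbf{q},\mathbf{p})\in\mathbb{Z}^n\times\mathbb{Z}^m$ and for every $N$ there exist $\mathbf{p}\in\mathbb{Z}^m$, $\mathbf{q}\in\mathbb{Z}^n\setminus\{\mathbf{0}\}$ with $\Vert A\mathbf{q}-\mathbf{p}\Vert<\Vert\mathbf{q}\Vert^{-N}$; $\mathscr{L}_{m,n}$ is the set of these. $\mathbb{R}^{m\times n}$ carries the topology of $\mathbb{R}^{mn}$. *)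

theory Defs
  imports "HOL-Analysis.Analysis"
begin

definition int_vec :: "real^'k \<Rightarrow> bool" where
  "int_vec v \<longleftrightarrow> (\<forall>i. v $ i \<in> \<int>)"

text \<open>Liouville matrices: real m x n matrices, as real^'n^'m (m rows, n columns);
  the norm is the supremum norm infnorm.\<close>
definition liouville_matrices :: "(real^'n^'m) set" where
  "liouville_matrices = {A.
     (\<forall>q p. int_vec q \<and> int_vec p \<and> (q \<noteq> 0 \<or> p \<noteq> 0) \<longrightarrow> A *v q - p \<noteq> 0) \<and>
     (\<forall>N::nat. \<exists>p q. int_vec p \<and> int_vec q \<and> q \<noteq> 0 \<and>
        infnorm (A *v q - p) < infnorm q powr (- real N))}"

definition gdelta :: "'a::topological_space set \<Rightarrow> bool" where
  "gdelta S \<longleftrightarrow> (\<exists>F::nat \<Rightarrow> 'a set. (\<forall>k. open (F k)) \<and> S = (\<Inter>k. F k))"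

end

theory Submission
  imports Defs
begin

text \<open>The Liouville matrices are the intersection of countably many open dense sets: for each
  \<open>N\<close> the matrices admitting some integer \<open>(q, p)\<close> with \<open>\<parallel>Aq - p\<parallel> < \<parallel>q\<parallel>\<^sup>-\<^sup>N\<close> (dense, since every
  matrix is a limit of matrices with \<open>Aq = p\<close> exactly), and for each integer \<open>(q, p)\<close> with
  \<open>q \<noteq> 0\<close> the matrices with \<open>Aq \<noteq> p\<close>. By invariance of domain a continuous injective map on
  an open set \<open>U\<close> pulls back open dense sets to open sets dense in \<open>U\<close>. Hence \<open>\<Omega>\<close> is a
  countable intersection of open sets dense in \<open>U\<close>, and Baire's theorem makes it dense.\<close>

lemma gdelta_countable_Inter:
  assumes "countable \<H>" and "\<And>H. H \<in> \<H> \<Longrightarrow> open H"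
  shows "gdelta (\<Inter>\<H>)"
proof (cases "\<H> = {}")
  case True
  then show ?thesis unfolding gdelta_def by (intro exI[of _ "\<lambda>_. UNIV"]) auto
next
  case False
  show ?thesis unfolding gdelta_def
    using assms from_nat_into[OF False] range_from_nat_into[OF False assms(1)]
    by (intro exI[of _ "from_nat_into \<H>"]) auto
qed

lemma Baire_open:
  fixes U :: "'a::{real_normed_vector,heine_borel} set"
  assumes "open U" and "countable \<H>"
    and "\<And>H. H \<in> \<H> \<Longrightarrow> open H \<and> U \<subseteq> closure H"
  shows "U \<subseteq> closure (U \<inter> \<Inter>\<H>)"
proof -
  \<comment> \<open>Padding each \<open>H\<close> with the exterior of \<open>U\<close> makes it dense in the whole space.\<close>
  define \<H>' where "\<H>' = (\<lambda>H. H \<union> - closure U) ` \<H>"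
  have "UNIV \<subseteq> closure (\<Inter>\<H>')"
  proof (rule Baire)
    show "countable \<H>'" unfolding \<H>'_def using assms(2) by simp
    fix T assume "T \<in> \<H>'"
    then obtain H where T: "T = H \<union> - closure U" and H: "H \<in> \<H>" unfolding \<H>'_def by auto
    have "closure U \<subseteq> closure H"
      using assms(3)[OF H] by (simp add: closure_minimal)
    then have "UNIV \<subseteq> closure T"
      unfolding T closure_Un using closure_subset[of "- closure U"] by blast
    moreover have "open T"
      unfolding T using assms(3)[OF H] by (simp add: open_Un open_Compl)
    ultimately show "openin (top_of_set UNIV) T \<and> UNIV \<subseteq> closure T" by simp
  qed simp
  then have "U \<subseteq> U \<inter> closure (\<Inter>\<H>')" by blast
  also have "\<dots> \<subseteq> closure (U \<inter> \<Inter>\<H>')"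
    by (rule open_Int_closure_subset[OF assms(1)])
  also have "\<dots> \<subseteq> closure (U \<inter> \<Inter>\<H>)"
  proof (rule closure_mono)
    show "U \<inter> \<Inter>\<H>' \<subseteq> U \<inter> \<Inter>\<H>"
      unfolding \<H>'_def using closure_subset[of U] by blast
  qed
  finally show ?thesis .
qed

lemma dense_in_open_vimage_inj:
  fixes g :: "'a::euclidean_space \<Rightarrow> 'a"
  assumes "open U" "continuous_on U g" "inj_on g U" "open D" "closure D = UNIV"
  shows "U \<subseteq> closure (U \<inter> g -` D)"
proof (rule subsetI, rule ccontr)
  fix A assume "A \<in> U" "A \<notin> closure (U \<inter> g -` D)"
  define V where "V = U - closure (U \<inter> g -` D)"
  have "open V" "A \<in> V" unfolding V_def using assms(1) \<open>A \<in> U\<close> \<open>A \<notin> _\<close> by auto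
  have "open (g ` V)"
    using invariance_of_domain[of V g] \<open>open V\<close> assms(2,3) unfolding V_def
    by (meson Diff_subset continuous_on_subset inj_on_subset)
  moreover have "g ` V \<noteq> {}" using \<open>A \<in> V\<close> by auto
  ultimately have "g ` V \<inter> D \<noteq> {}"
    using assms(5) open_Int_closure_eq_empty[of "g ` V" D] by auto
  then obtain B where "B \<in> V" "g B \<in> D" by blast
  then have "B \<in> U \<inter> g -` D" "B \<notin> closure (U \<inter> g -` D)" unfolding V_def by auto
  then show False using closure_subset[of "U \<inter> g -` D"] by (meson subsetD)
qed

lemma continuous_on_matrix_vector_mult_left:
  "continuous_on S (\<lambda>A::real^'n^'m. A *v q)"
  unfolding matrix_vector_mult_def by (intro continuous_intros continuous_on_vec_lambda)

definition liouville_approx :: "nat \<Rightarrow> (real^'n^'m) set" where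
  "liouville_approx N = {A. \<exists>p q. int_vec p \<and> int_vec q \<and> q \<noteq> 0 \<and>
     infnorm (A *v q - p) < infnorm q powr - real N}"

lemma countable_int_vec: "countable {q :: real^'k. int_vec q}"
proof (rule countable_subset)
  show "{q :: real^'k. int_vec q} \<subseteq> range (\<lambda>g::'k \<Rightarrow> int. \<chi> i. of_int (g i))"
  proof
    fix q :: "real^'k" assume "q \<in> {q. int_vec q}"
    then have "\<forall>i. \<exists>z::int. q $ i = of_int z" unfolding int_vec_def by (auto elim!: Ints_cases)
    then obtain g where "\<forall>i. q $ i = of_int (g i)" by metis
    then show "q \<in> range (\<lambda>g::'k \<Rightarrow> int. \<chi> i. of_int (g i))"
      by (intro image_eqI[where x=g]) (simp_all add: vec_eq_iff)
  qed
qed simp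

lemma open_liouville_approx: "open (liouville_approx N)"
proof -
  have "liouville_approx N = (\<Union>p\<in>{p. int_vec p}. \<Union>q\<in>{q. int_vec q \<and> q \<noteq> 0}.
          {A. infnorm (A *v q - p) < infnorm q powr - real N})"
    unfolding liouville_approx_def by auto
  also have "open \<dots>"
    by (intro open_UN ballI open_Collect_less continuous_intros continuous_on_matrix_vector_mult_left)
  finally show ?thesis .
qed

lemma open_matrix_vector_mult_neq: "open {A::real^'n^'m. A *v q \<noteq> p}"
  by (intro open_Collect_neq continuous_on_matrix_vector_mult_left continuous_on_const)

lemma tendsto_floor_mult_divide:
  "(\<lambda>K. of_int \<lfloor>real (Suc K) * a\<rfloor> / real (Suc K)) \<longlonglongrightarrow> (a::real)"
proof (rule real_tendsto_sandwich[where f="\<lambda>K. a - 1 / real (Suc K)" and h="\<lambda>K. a"])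
  have "a - 1 / s \<le> of_int \<lfloor>s * a\<rfloor> / s \<and> of_int \<lfloor>s * a\<rfloor> / s \<le> a" if "s > 0" for s :: real
  proof -
    have "(s * a - 1) / s \<le> of_int \<lfloor>s * a\<rfloor> / s" "of_int \<lfloor>s * a\<rfloor> / s \<le> (s * a) / s"
      using that by (intro divide_right_mono; linarith)+
    then show ?thesis using that by (simp add: diff_divide_distrib)
  qed
  then show "\<forall>\<^sub>F K in sequentially. a - 1 / real (Suc K) \<le> of_int \<lfloor>real (Suc K) * a\<rfloor> / real (Suc K)"
    and "\<forall>\<^sub>F K in sequentially. of_int \<lfloor>real (Suc K) * a\<rfloor> / real (Suc K) \<le> a"
    by (auto simp del: of_nat_Suc)
  show "(\<lambda>K. a - 1 / real (Suc K)) \<longlonglongrightarrow> a"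
    using tendsto_diff[OF tendsto_const[of a] LIMSEQ_inverse_real_of_nat] by (simp add: inverse_eq_divide)
qed simp

lemma dense_liouville_approx: "closure (liouville_approx N :: (real^'n^'m) set) = UNIV"
proof (intro set_eqI iffI UNIV_I)
  fix A :: "real^'n^'m"
  fix j :: 'n
  \<comment> \<open>Rounding column \<open>j\<close> to multiples of \<open>1/(K+1)\<close> makes \<open>y K *v q\<close> integral for \<open>q = (K+1) e\<^sub>j\<close>.\<close>
  define y where "y K = (\<chi> i k. if k = j then of_int \<lfloor>real (Suc K) * A$i$k\<rfloor> / real (Suc K) else A$i$k)" for K
  have "y K \<in> liouville_approx N" for K
  proof -
    define q :: "real^'n" where "q = (\<chi> k. if k = j then real (Suc K) else 0)"
    define p :: "real^'m" where "p = (\<chi> i. of_int \<lfloor>real (Suc K) * A$i$j\<rfloor>)"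
    have "q $ j \<noteq> 0" unfolding q_def by simp
    then have "q \<noteq> 0" by auto
    moreover have "int_vec q" "int_vec p" unfolding int_vec_def q_def p_def by auto
    moreover have "y K *v q = p"
      by (simp add: vec_eq_iff matrix_vector_mult_def y_def q_def p_def if_distrib cong: if_cong)
    ultimately show ?thesis
      unfolding liouville_approx_def using infnorm_pos_lt[of q]
      by (intro CollectI exI[of _ p] exI[of _ q]) (simp add: infnorm_0)
  qed
  moreover have "y \<longlonglongrightarrow> A"
  proof (intro vec_tendstoI)
    fix i k
    show "(\<lambda>K. y K $ i $ k) \<longlonglongrightarrow> A $ i $ k"
      using tendsto_floor_mult_divide[of "A $ i $ k"] by (cases "k = j") (simp_all add: y_def)
  qed
  ultimately show "A \<in> closure (liouville_approx N)"
    by (intro closure_sequential[THEN iffD2] exI[of _ y]) simp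
qed

lemma dense_matrix_vector_mult_neq:
  fixes q :: "real^'n" and p :: "real^'m"
  assumes "q \<noteq> 0"
  shows "closure {A. A *v q \<noteq> p} = UNIV"
proof (intro set_eqI iffI UNIV_I)
  fix A :: "real^'n^'m"
  show "A \<in> closure {A. A *v q \<noteq> p}"
  proof (cases "A *v q = p")
    case False
    then show ?thesis by (simp add: closure_subset[THEN subsetD])
  next
    case True
    obtain j where j: "q $ j \<noteq> 0" using assms by (auto simp: vec_eq_iff)
    define M :: "real^'n^'m" where "M = (\<chi> i k. if k = j then 1 else 0)"
    have Mq: "M *v q = (\<chi> i. q $ j)"
      by (simp add: vec_eq_iff matrix_vector_mult_def M_def of_bool_def[symmetric])
    define y where "y n = A + (1 / real (Suc n)) *\<^sub>R M" for n
    have "y n *v q = p + (1 / real (Suc n)) *\<^sub>R (\<chi> i. q $ j)" for n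
      by (simp add: y_def matrix_vector_mult_add_rdistrib scaleR_matrix_vector_assoc[symmetric] Mq True)
    moreover have "(\<chi> i::'m. q $ j) \<noteq> 0"
      using j by (simp add: vec_eq_iff)
    ultimately have "y n \<in> {A. A *v q \<noteq> p}" for n
      by (simp del: of_nat_Suc)
    moreover have "y \<longlonglongrightarrow> A"
      unfolding y_def
      using tendsto_add[OF tendsto_const tendsto_scaleR[OF LIMSEQ_inverse_real_of_nat tendsto_const]]
      by (simp add: inverse_eq_divide)
    ultimately show ?thesis
      by (intro closure_sequential[THEN iffD2] exI[of _ y]) simp
  qed
qed

definition liouville_family :: "(real^'n^'m) set set" where
  "liouville_family = range liouville_approx \<union>
     (\<lambda>(q, p). {A. A *v q \<noteq> p}) ` ({q. int_vec q \<and> q \<noteq> 0} \<times> {p. int_vec p})"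

lemma countable_liouville_family: "countable liouville_family"
proof -
  have "countable ({q :: real^'n. int_vec q \<and> q \<noteq> 0} \<times> {p :: real^'m. int_vec p})"
    by (intro countable_SIGMA countable_subset[OF _ countable_int_vec]) auto
  then show ?thesis
    unfolding liouville_family_def by (intro countable_Un countable_image) simp_all
qed

lemma open_dense_liouville_family:
  assumes "G \<in> liouville_family"
  shows "open G \<and> closure G = UNIV"
  using assms unfolding liouville_family_def
  by (auto simp: open_liouville_approx dense_liouville_approx open_matrix_vector_mult_neq
      dense_matrix_vector_mult_neq)

lemma liouville_matrices_eq_Inter_family: "liouville_matrices = \<Inter>liouville_family"
proof -
  have "(\<forall>q p. int_vec q \<and> int_vec p \<and> (q \<noteq> 0 \<or> p \<noteq> 0) \<longrightarrow> A *v q - p \<noteq> 0) \<longleftrightarrow>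
        (\<forall>q p. int_vec q \<and> q \<noteq> 0 \<and> int_vec p \<longrightarrow> A *v q \<noteq> p)" for A :: "real^'n^'m"
    by (metis eq_iff_diff_eq_0 matrix_vector_mult_0_right)
  then have "(liouville_matrices :: (real^'n^'m) set) =
     (\<Inter>N. liouville_approx N) \<inter>
     (\<Inter>(q, p) \<in> {q. int_vec q \<and> q \<noteq> 0} \<times> {p. int_vec p}. {A. A *v q \<noteq> p})"
    unfolding liouville_matrices_def liouville_approx_def by auto
  then show ?thesis
    by (simp add: liouville_family_def Inter_Un_distrib)
qed

theorem theorem3:
  fixes U :: "(real^'n^'m) set" and f :: "nat \<Rightarrow> real^'n^'m \<Rightarrow> real^'n^'m"
  assumes "open U" and "U \<noteq> {}"
    and "\<And>k. k \<ge> 1 \<Longrightarrow> continuous_on U (f k) \<and> inj_on (f k) U"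
  defines "\<Omega> \<equiv> (\<Inter>k\<in>{1..}. {A \<in> U. f k A \<in> liouville_matrices}) \<inter> liouville_matrices"
  shows "gdelta \<Omega> \<and> \<Omega> \<subseteq> U \<and> U \<subseteq> closure \<Omega>"
proof -
  define gs where "gs = insert id (f ` {1..})"
  have gs: "continuous_on U g \<and> inj_on g U" if "g \<in> gs" for g
    using that assms(3) unfolding gs_def by auto
  define \<H> where "\<H> = (\<lambda>(g, G). U \<inter> g -` G) ` (gs \<times> liouville_family)"
  have "countable \<H>"
    unfolding \<H>_def gs_def
    by (intro countable_image countable_SIGMA countable_insert countable_liouville_family ballI) simp_all
  have \<H>: "open H \<and> U \<subseteq> closure H" if "H \<in> \<H>" for H
  proof -
    obtain g G where H: "H = U \<inter> g -` G" and g: "g \<in> gs" and G: "G \<in> liouville_family"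
      using \<open>H \<in> \<H>\<close> unfolding \<H>_def by auto
    have "open G" "closure G = UNIV" using open_dense_liouville_family[OF G] by simp_all
    moreover have "continuous_on U g" "inj_on g U" using gs[OF g] by simp_all
    ultimately show ?thesis
      unfolding H by (simp add: continuous_open_preimage assms(1) dense_in_open_vimage_inj)
  qed
  have "U \<inter> \<Inter>\<H> = {A \<in> U. \<forall>g\<in>gs. g A \<in> liouville_matrices}"
    unfolding \<H>_def liouville_matrices_eq_Inter_family by auto
  also have "\<dots> = \<Omega>"
    unfolding \<Omega>_def gs_def by auto
  finally have \<Omega>: "\<Omega> = U \<inter> \<Inter>\<H>" ..
  have "gdelta (\<Inter>(insert U \<H>))"
    by (rule gdelta_countable_Inter) (use assms(1) \<H> \<open>countable \<H>\<close> in auto)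
  moreover have "U \<subseteq> closure (U \<inter> \<Inter>\<H>)"
    by (rule Baire_open[OF assms(1) \<open>countable \<H>\<close> \<H>])
  ultimately show ?thesis unfolding \<Omega> by simp
qed

end
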